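(* Fix a time $t$. Let $\hat{\mathcal Z}_t$, $\hat{\mathcal Z}_{t+1}$ be Banach spaces, let $\mathfrak F_{\mathcal Y}$ and $\mathfrak F_{\hat{\mathcal Z}_{t+1}}$ be classes of uniformly bounded measurable real functions on $\mathcal Y$ and on $\hat{\mathcal Z}_{t+1}$ respectively, and let $\delta_t>0$. Let $\hat\sigma_t:\mathcal H_t\to\hat{\mathcal Z}_t$ and $\hat\sigma_{t+1}:\mathcal H_{t+1}\to\hat{\mathcal Z}_{t+1}$ be measurable history compression functions. Suppose: (AP2a) there is a measurable update function $\hat\varphi_t:\hat{\mathcal Z}_t\times\mathcal Y\times\mathcal A\to\hat{\mathcal Z}_{t+1}$ such that for every realization $h_{t+1}=(h_t,y_t,a_t)$ of $H_{t+1}$, $\hat\sigma_{t+1}(h_{t+1})=\hat\varphi_t(\hat\sigma_t(h_t),y_t,a_t)$; (AP2b) there is a measurable kernel $\hat P^y_t:\hat{\mathcal Z}_t\times\mathcal A\to\Delta(\mathcal Y)$ such that for every realization $h_t$ of $H_t$ and every $a_t\in\mathcal A$, setting $\mu^y_t(B)=\mathbb P(Y_t\in B\mid H_t=h_t,A_t=a_t)$ and $\nu^y_t(B)=\hat P^y_t(B\mid\hat\sigma_t(h_t),a_t)$ for Borel $B\subseteq\mathcal Y$, we have $d_{\mathfrak F_{\mathcal Y}}(\mu^y_t,\nu^y_t)\le \delta_t/\kappa_t$, where $\kappa_t=\sup_{h_t\in\mathcal H_t,\,a_t\in\mathcal A}\kappa_{\mathfrak F_{\mathcal Y},\mathfrak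 F_{\hat{\mathcal Z}_{t+1}}}\big(\hat\varphi_t(\hat\sigma_t(h_t),\cdot,a_t)\big)$. Define the kernel $\hat P_t:\hat{\mathcal Z}_t\times\mathcal A\to\Delta(\hat{\mathcal Z}_{t+1})$ by $\hat P_t(B\mid\hat\sigma_t(h_t),a_t)=\int_{\mathcal Y}\mathbf 1_B\big(\hat\varphi_t(\hat\sigma_t(h_t),y,a_t)\big)\,\hat P^y_t(dy\mid\hat\sigma_t(h_t),a_t)$ for Borel $B\subseteq\hat{\mathcal Z}_{t+1}$. Then (AP2) holds: for every realization $h_t$ of $H_t$ and every $a_t\in\mathcal A$, with $\mu_t(B)=\mathbb P(\hat\sigma_{t+1}(H_{t+1})\in B\mid H_t=h_t,A_t=a_t)$ and $\nu_t(B)=\hat P_t(B\mid\hat\sigma_t(h_t),a_t)$, we have $d_{\mathfrak F_{\hat{\mathcal Z}_{t+1}}}(\mu_t,\nu_t)\le\delta_t$.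
   Context: Setting: a stochastic input-output system over a finite horizon $t=1,\dots,T$. At each time $t$ an agent chooses an action $A_t$ in an action space $\mathcal A$; the system then produces an observation $Y_t$ in a measurable space $\mathcal Y$ and a real reward $R_t$. The history is $H_1=\emptyset$ and $H_{t+1}=(H_t,Y_t,A_t)$, i.e. $H_t=(Y_{1:t-1},A_{1:t-1})$, taking values in $\mathcal H_t$; the conditional law of $(Y_t,R_t)$ given $(H_t,A_t)$ is fixed by the system. Integral probability metric: for a class $\mathfrak F$ of uniformly bounded measurable real functions on a measurable space $\mathcal X$ and probability measures $\mu,\nu$ on $\mathcal X$, $d_{\mathfrak F}(\mu,\nu)=\sup_{f\in\mathfrak F}\left|\int f\,d\mu-\int f\,d\nu\right|$. Minkowski functional: $\rho_{\mathfrak F}(f)=\inf\{\rho>0:\rho^{-1}f\in\mathfrak F\}$. Contraction factor: for $\ell:\mathcal X\to\mathcal X'$ and function classes $\mathfrak F_{\mathcal X}$ on $\mathcal X$, $\mathfrak F_{\mathcal X'}$ on $\mathcal X'$, $\kappa_{\mathfrak F_{\mathcal X},\mathfrak F_{\mathcal X'}}(\ell)=\sup_{f\in\mathfrak F_{\mathcal X'}}\rho_{\mathfrak F_{\mathcal X}}(f\circ\ell)$. *)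

theory Defs
  imports "HOL-Probability.Probability"
begin

text \<open>Integral probability metric d_F(mu,nu) = sup over f in F of |int f dmu - int f dnu|,
  valued in the extended reals (sup of the empty class is -infinity).\<close>
definition ipm :: "('x \<Rightarrow> real) set \<Rightarrow> 'x measure \<Rightarrow> 'x measure \<Rightarrow> ereal" where
  "ipm F \<mu> \<nu> = (SUP f\<in>F. ereal \<bar>(\<integral>x. f x \<partial>\<mu>) - (\<integral>x. f x \<partial>\<nu>)\<bar>)"

text \<open>Minkowski functional rho_F(f) = inf {rho > 0. rho^-1 f in F} (inf of the empty set is +infinity).\<close>
definition minkowski :: "('x \<Rightarrow> real) set \<Rightarrow> ('x \<Rightarrow> real) \<Rightarrow> ereal" where
  "minkowski F f = (INF \<rho>\<in>{\<rho>::real. \<rho> > 0 \<and> (\<lambda>x. inverse \<rho> * f x) \<in> F}. ereal \<rho>)"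

definition contraction :: "('x \<Rightarrow> real) set \<Rightarrow> ('x' \<Rightarrow> real) set \<Rightarrow> ('x \<Rightarrow> 'x') \<Rightarrow> ereal" where
  "contraction FX FX' l = (SUP f\<in>FX'. minkowski FX (f \<circ> l))"

definition unif_bdd_meas_class :: "'x measure \<Rightarrow> ('x \<Rightarrow> real) set \<Rightarrow> bool" where
  "unif_bdd_meas_class M F \<longleftrightarrow> F \<subseteq> borel_measurable M \<and> (\<exists>C. \<forall>f\<in>F. \<forall>x\<in>space M. \<bar>f x\<bar> \<le> C)"

definition hatP :: "('z \<times> 'y \<times> 'a \<Rightarrow> 'w::topological_space) \<Rightarrow> ('z \<times> 'a \<Rightarrow> 'y measure) \<Rightarrow> 'z \<Rightarrow> 'a \<Rightarrow> 'w measure" where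
  "hatP \<phi> Py z a = measure_of (space borel) (sets borel)
     (\<lambda>B. \<integral>\<^sup>+ y. indicator B (\<phi> (z, y, a)) \<partial>(Py (z, a)))"

end

theory Submission
  imports Defs
begin

text \<open>By (AP2a) the law of \<open>\<sigma>t1 (h, Y, a)\<close> under \<open>K (h, a)\<close> is the pushforward of
  \<open>K (h, a)\<close> along \<open>l = \<phi> (\<sigma>t h, -, a)\<close>, and \<open>hatP\<close> is the pushforward of \<open>Py (\<sigma>t h, a)\<close>
  along the same map. For \<open>f \<in> FZ\<close>, whenever \<open>\<rho>\<^sup>-\<^sup>1 (f \<circ> l) \<in> FY\<close> the difference of the
  integrals of \<open>f \<circ> l\<close> is at most \<open>\<rho>\<close> times the \<open>FY\<close>-distance; taking the infimum over \<open>\<rho>\<close>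
  and then the supremum over \<open>f\<close> bounds the \<open>FZ\<close>-distance of the pushforwards by
  \<open>\<kappa> \<cdot> \<delta> / \<kappa> \<le> \<delta>\<close>.\<close>

lemma (in prob_space) abs_integral_le_const:
  fixes f :: "'a \<Rightarrow> real"
  assumes bound: "\<And>x. x \<in> space M \<Longrightarrow> \<bar>f x\<bar> \<le> C"
  shows "\<bar>\<integral>x. f x \<partial>M\<bar> \<le> C"
proof (cases "integrable M f")
  case True
  have "\<bar>\<integral>x. f x \<partial>M\<bar> \<le> (\<integral>x. \<bar>f x\<bar> \<partial>M)" by simp
  also have "\<dots> \<le> C"
    using True bound by (intro integral_le_const) (auto intro!: AE_I2)
  finally show ?thesis .
next
  case False
  obtain x where "x \<in> space M" using not_empty by blast
  then have "0 \<le> C" using bound[of x] by linarith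
  with False show ?thesis by (simp add: not_integrable_integral_eq)
qed

lemma ipm_less_top:
  assumes F: "unif_bdd_meas_class M F"
    and \<mu>: "prob_space \<mu>" "sets \<mu> = sets M" and \<nu>: "prob_space \<nu>" "sets \<nu> = sets M"
  shows "ipm F \<mu> \<nu> < \<infinity>"
proof -
  obtain C where C: "\<And>f x. f \<in> F \<Longrightarrow> x \<in> space M \<Longrightarrow> \<bar>f x\<bar> \<le> C"
    using F unfolding unif_bdd_meas_class_def by blast
  have "ipm F \<mu> \<nu> \<le> ereal (2 * C)"
    unfolding ipm_def
  proof (rule SUP_least)
    fix f assume f: "f \<in> F"
    have "\<bar>\<integral>x. f x \<partial>\<mu>\<bar> \<le> C"
      using C[OF f] sets_eq_imp_space_eq[OF \<mu>(2)]
      by (intro prob_space.abs_integral_le_const[OF \<mu>(1)]) simp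
    moreover have "\<bar>\<integral>x. f x \<partial>\<nu>\<bar> \<le> C"
      using C[OF f] sets_eq_imp_space_eq[OF \<nu>(2)]
      by (intro prob_space.abs_integral_le_const[OF \<nu>(1)]) simp
    ultimately show "ereal \<bar>(\<integral>x. f x \<partial>\<mu>) - (\<integral>x. f x \<partial>\<nu>)\<bar> \<le> ereal (2 * C)" by simp
  qed
  then show ?thesis by (rule order.strict_trans1) simp
qed

lemma minkowski_nonneg: "0 \<le> minkowski G g"
  unfolding minkowski_def by (rule INF_greatest) auto

lemma minkowski_empty: "minkowski {} g = \<infinity>"
  by (simp add: minkowski_def top_ereal_def)

lemma ipm_nonneg:
  assumes "G \<noteq> {}"
  shows "0 \<le> ipm G \<mu> \<nu>"
proof -
  from assms obtain f where "f \<in> G" by blast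
  then show ?thesis unfolding ipm_def by (rule SUP_upper2) simp
qed

lemma abs_integral_diff_le_mult_ipm:
  assumes "\<rho> > 0" "(\<lambda>x. inverse \<rho> * g x) \<in> G"
  shows "ereal \<bar>(\<integral>x. g x \<partial>\<mu>) - (\<integral>x. g x \<partial>\<nu>)\<bar> \<le> ereal \<rho> * ipm G \<mu> \<nu>"
proof -
  have "\<bar>(\<integral>x. g x \<partial>\<mu>) - (\<integral>x. g x \<partial>\<nu>)\<bar>
      = \<rho> * \<bar>(\<integral>x. inverse \<rho> * g x \<partial>\<mu>) - (\<integral>x. inverse \<rho> * g x \<partial>\<nu>)\<bar>"
    using assms(1) by (simp add: right_diff_distrib[symmetric] abs_mult)
  also have "ereal \<dots> \<le> ereal \<rho> * ipm G \<mu> \<nu>"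
    unfolding times_ereal.simps(1)[symmetric] ipm_def
    using assms by (intro ereal_mult_left_mono SUP_upper2[of "\<lambda>x. inverse \<rho> * g x"]) auto
  finally show ?thesis .
qed

text \<open>Finiteness of the distance matters: in \<open>ereal\<close>, \<open>0 * \<infinity> = 0\<close>.\<close>

lemma abs_integral_diff_le_minkowski_mult_ipm:
  assumes minkowski_finite: "minkowski G g < \<infinity>" and ipm_finite: "ipm G \<mu> \<nu> < \<infinity>"
  shows "ereal \<bar>(\<integral>x. g x \<partial>\<mu>) - (\<integral>x. g x \<partial>\<nu>)\<bar> \<le> minkowski G g * ipm G \<mu> \<nu>"
proof -
  define S where "S = {\<rho>::real. \<rho> > 0 \<and> (\<lambda>x. inverse \<rho> * g x) \<in> G}"
  define D where "D = \<bar>(\<integral>x. g x \<partial>\<mu>) - (\<integral>x. g x \<partial>\<nu>)\<bar>"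
  have minkowski_S: "minkowski G g = (INF \<rho>\<in>S. ereal \<rho>)"
    by (simp add: minkowski_def S_def)
  have D_le: "ereal D \<le> ereal \<rho> * ipm G \<mu> \<nu>" if "\<rho> \<in> S" for \<rho>
    using that unfolding S_def D_def by (intro abs_integral_diff_le_mult_ipm) auto
  have "S \<noteq> {}"
    using minkowski_finite by (auto simp: minkowski_S top_ereal_def)
  then obtain \<rho>\<^sub>0 where \<rho>\<^sub>0: "\<rho>\<^sub>0 \<in> S" by blast
  then have "G \<noteq> {}" by (auto simp: S_def)
  then have "0 \<le> ipm G \<mu> \<nu>" by (rule ipm_nonneg)
  with ipm_finite obtain I where I: "ipm G \<mu> \<nu> = ereal I" "0 \<le> I"
    by (cases "ipm G \<mu> \<nu>") auto
  from minkowski_finite minkowski_nonneg[of G g] obtain m where m: "minkowski G g = ereal m"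
    by (cases "minkowski G g") auto
  have "D \<le> m * I"
  proof (cases "I = 0")
    case True
    then show ?thesis using D_le[OF \<rho>\<^sub>0] I by (simp add: D_def)
  next
    case False
    with I have "0 < I" by simp
    have "ereal (D / I) \<le> minkowski G g"
      unfolding minkowski_S
    proof (rule INF_greatest)
      fix \<rho> assume "\<rho> \<in> S"
      with D_le I \<open>0 < I\<close> show "ereal (D / I) \<le> ereal \<rho>"
        by (simp add: divide_le_eq)
    qed
    with m \<open>0 < I\<close> show ?thesis by (simp add: divide_le_eq mult.commute)
  qed
  then show ?thesis using I m by (simp add: D_def)
qed

lemma ipm_distr_le_mult:
  assumes l: "l \<in> M \<rightarrow>\<^sub>M N" and F: "F \<subseteq> borel_measurable N"
    and sets: "sets \<mu> = sets M" "sets \<nu> = sets M"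
    and contraction: "contraction G F l \<le> c" "c < \<infinity>"
    and ipm: "ipm G \<mu> \<nu> \<le> b" "ipm G \<mu> \<nu> < \<infinity>"
  shows "ipm F (distr \<mu> N l) (distr \<nu> N l) \<le> c * b"
  unfolding ipm_def
proof (rule SUP_least)
  fix f assume f: "f \<in> F"
  have "minkowski G (f \<circ> l) \<le> contraction G F l"
    unfolding contraction_def using f by (rule SUP_upper)
  with contraction(1) have minkowski_le: "minkowski G (f \<circ> l) \<le> c" by (rule order_trans[rotated])
  from this contraction(2) have minkowski_finite: "minkowski G (f \<circ> l) < \<infinity>"
    by (rule order.strict_trans1)
  then have "G \<noteq> {}" by (auto simp: minkowski_empty)
  have f_meas: "f \<in> borel_measurable N" using F f by blast
  have "l \<in> \<mu> \<rightarrow>\<^sub>M N" "l \<in> \<nu> \<rightarrow>\<^sub>M N"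
    using l by (simp_all only: measurable_cong_sets[OF sets(1) refl]
        measurable_cong_sets[OF sets(2) refl])
  note integral_distr[OF this(1) f_meas] integral_distr[OF this(2) f_meas]
  then have "ereal \<bar>(\<integral>x. f x \<partial>distr \<mu> N l) - (\<integral>x. f x \<partial>distr \<nu> N l)\<bar>
      \<le> minkowski G (f \<circ> l) * ipm G \<mu> \<nu>"
    using abs_integral_diff_le_minkowski_mult_ipm[OF minkowski_finite ipm(2)] by (simp add: comp_def)
  also have "\<dots> \<le> c * b"
    by (rule ereal_mult_mono'[OF minkowski_nonneg ipm_nonneg[OF \<open>G \<noteq> {}\<close>] minkowski_le ipm(1)])
  finally show "ereal \<bar>(\<integral>x. f x \<partial>distr \<mu> N l) - (\<integral>x. f x \<partial>distr \<nu> N l)\<bar> \<le> c * b" .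
qed

lemma prob_kernel_apply:
  assumes "K \<in> M \<rightarrow>\<^sub>M prob_algebra N" "x \<in> space M"
  shows "sets (K x) = sets N" "prob_space (K x)"
  using measurable_space[OF assms] by (auto simp: space_prob_algebra)

lemma hatP_eq_distr:
  fixes \<phi> :: "'z \<times> 'y \<times> 'a \<Rightarrow> 'w::topological_space"
  assumes "(\<lambda>y. \<phi> (z, y, a)) \<in> Py (z, a) \<rightarrow>\<^sub>M borel"
  shows "hatP \<phi> Py z a = distr (Py (z, a)) borel (\<lambda>y. \<phi> (z, y, a))"
  unfolding hatP_def distr_def
proof (rule measure_of_eq)
  show "sets borel \<subseteq> Pow (space borel)" by (rule sets.space_closed)
  fix B :: "'w set" assume "B \<in> sigma_sets (space borel) (sets borel)"
  then have B: "B \<in> sets borel" using sets.sigma_sets_eq[of "borel :: 'w measure"] by simp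
  have "(\<integral>\<^sup>+ y. indicator B (\<phi> (z, y, a)) \<partial>Py (z, a))
      = (\<integral>\<^sup>+ y. indicator ((\<lambda>y. \<phi> (z, y, a)) -` B \<inter> space (Py (z, a))) y \<partial>Py (z, a))"
    by (intro nn_integral_cong) (auto split: split_indicator)
  also have "\<dots> = emeasure (Py (z, a)) ((\<lambda>y. \<phi> (z, y, a)) -` B \<inter> space (Py (z, a)))"
    using measurable_sets[OF assms B] by simp
  finally show "(\<integral>\<^sup>+ y. indicator B (\<phi> (z, y, a)) \<partial>Py (z, a))
      = emeasure (Py (z, a)) ((\<lambda>y. \<phi> (z, y, a)) -` B \<inter> space (Py (z, a)))" .
qed

text \<open>This covers \<open>\<kappa> = 0\<close>, where (AP2b) is vacuous since \<open>\<delta> / 0 = \<infinity>\<close> and \<open>0 * \<infinity> = 0\<close>.\<close>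

lemma ereal_mult_divide_le:
  fixes \<kappa> :: ereal
  assumes "\<kappa> < \<infinity>" "0 \<le> \<delta>"
  shows "\<kappa> * (ereal \<delta> / \<kappa>) \<le> ereal \<delta>"
proof (cases \<kappa>)
  case (real r)
  then show ?thesis
    using assms(2) by (cases "r = 0") (simp_all add: divide_ereal_def mult.left_commute)
qed (use assms in \<open>simp_all add: divide_ereal_def\<close>)

theorem mainTheorem1:
  fixes MH :: "'h measure" and MY :: "'y measure" and MA :: "'a measure"
    and K :: "'h \<times> 'a \<Rightarrow> 'y measure"
    and FY :: "('y \<Rightarrow> real) set" and FZ :: "('w::banach \<Rightarrow> real) set"
    and \<delta> :: real
    and \<sigma>t :: "'h \<Rightarrow> 'z::banach" and \<sigma>t1 :: "'h \<times> 'y \<times> 'a \<Rightarrow> 'w"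
    and \<phi> :: "'z \<times> 'y \<times> 'a \<Rightarrow> 'w" and Py :: "'z \<times> 'a \<Rightarrow> 'y measure"
  assumes K_kernel: "K \<in> MH \<Otimes>\<^sub>M MA \<rightarrow>\<^sub>M prob_algebra MY"
    and FY: "unif_bdd_meas_class MY FY"
    and FZ: "unif_bdd_meas_class (borel :: 'w measure) FZ"
    and \<delta>_pos: "\<delta> > 0"
    and \<sigma>t_meas: "\<sigma>t \<in> borel_measurable MH"
    and \<sigma>t1_meas: "\<sigma>t1 \<in> borel_measurable (MH \<Otimes>\<^sub>M (MY \<Otimes>\<^sub>M MA))"
    and \<phi>_meas: "\<phi> \<in> borel_measurable ((borel :: 'z measure) \<Otimes>\<^sub>M (MY \<Otimes>\<^sub>M MA))"
    and AP2a: "\<forall>h\<in>space MH. \<forall>y\<in>space MY. \<forall>a\<in>space MA. \<sigma>t1 (h, y, a) = \<phi> (\<sigma>t h, y, a)"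
    and Py_kernel: "Py \<in> (borel :: 'z measure) \<Otimes>\<^sub>M MA \<rightarrow>\<^sub>M prob_algebra MY"
    and \<kappa>_finite: "(SUP p\<in>space MH \<times> space MA.
                       contraction FY FZ (\<lambda>y. \<phi> (\<sigma>t (fst p), y, snd p))) < \<infinity>"
    and AP2b: "\<forall>h\<in>space MH. \<forall>a\<in>space MA.
                 ipm FY (K (h, a)) (Py (\<sigma>t h, a))
                   \<le> ereal \<delta> / (SUP p\<in>space MH \<times> space MA.
                       contraction FY FZ (\<lambda>y. \<phi> (\<sigma>t (fst p), y, snd p)))"
  shows "\<forall>h\<in>space MH. \<forall>a\<in>space MA.
           ipm FZ (distr (K (h, a)) borel (\<lambda>y. \<sigma>t1 (h, y, a))) (hatP \<phi> Py (\<sigma>t h) a)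
             \<le> ereal \<delta>"
proof (intro ballI)
  fix h a assume h: "h \<in> space MH" and a: "a \<in> space MA"
  define \<kappa> where "\<kappa> = (SUP p\<in>space MH \<times> space MA.
                       contraction FY FZ (\<lambda>y. \<phi> (\<sigma>t (fst p), y, snd p)))"
  define l where "l = (\<lambda>y. \<phi> (\<sigma>t h, y, a))"
  have "(h, a) \<in> space (MH \<Otimes>\<^sub>M MA)" "(\<sigma>t h, a) \<in> space (borel \<Otimes>\<^sub>M MA)"
    using h a by (simp_all add: space_pair_measure)
  note K_sets = prob_kernel_apply(1)[OF K_kernel this(1)]
    and K_prob = prob_kernel_apply(2)[OF K_kernel this(1)]
    and P_sets = prob_kernel_apply(1)[OF Py_kernel this(2)]
    and P_prob = prob_kernel_apply(2)[OF Py_kernel this(2)]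
  have l_meas: "l \<in> MY \<rightarrow>\<^sub>M borel"
    unfolding l_def using a by (intro measurable_compose[OF _ \<phi>_meas]) simp
  have "distr (K (h, a)) borel (\<lambda>y. \<sigma>t1 (h, y, a)) = distr (K (h, a)) borel l"
    using AP2a h a by (intro distr_cong) (simp_all add: l_def sets_eq_imp_space_eq[OF K_sets])
  moreover have "hatP \<phi> Py (\<sigma>t h) a = distr (Py (\<sigma>t h, a)) borel l"
    using l_meas unfolding l_def by (intro hatP_eq_distr) (simp add: measurable_cong_sets[OF P_sets])
  moreover have "ipm FZ (distr (K (h, a)) borel l) (distr (Py (\<sigma>t h, a)) borel l)
      \<le> \<kappa> * (ereal \<delta> / \<kappa>)"
  proof (rule ipm_distr_le_mult[OF l_meas _ K_sets P_sets])
    show "FZ \<subseteq> borel_measurable borel" using FZ by (simp add: unif_bdd_meas_class_def)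
    show "contraction FY FZ l \<le> \<kappa>"
      unfolding \<kappa>_def l_def using h a by (intro SUP_upper2[of "(h, a)"]) simp_all
    show "\<kappa> < \<infinity>" using \<kappa>_finite by (simp add: \<kappa>_def)
    show "ipm FY (K (h, a)) (Py (\<sigma>t h, a)) \<le> ereal \<delta> / \<kappa>"
      using AP2b h a by (simp add: \<kappa>_def)
    show "ipm FY (K (h, a)) (Py (\<sigma>t h, a)) < \<infinity>"
      using FY K_prob K_sets P_prob P_sets by (rule ipm_less_top)
  qed
  moreover have "\<kappa> * (ereal \<delta> / \<kappa>) \<le> ereal \<delta>"
    using \<kappa>_finite \<delta>_pos by (intro ereal_mult_divide_le) (simp_all add: \<kappa>_def)
  ultimately show "ipm FZ (distr (K (h, a)) borel (\<lambda>y. \<sigma>t1 (h, y, a))) (hatP \<phi> Py (\<sigma>t h) a)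
      \<le> ereal \<delta>"
    by simp
qed

end
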